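(* Consider a discounted Markov decision problem as described in the context, and let $\rho,\mu\in\Delta(\mathcal{S})$. Suppose $V_\mu$ is $L$-smooth on $\Pi$, i.e. $\|\nabla V_\mu(\pi)-\nabla V_\mu(\pi')\|_2\le L\|\pi-\pi'\|_2$ for all $\pi,\pi'\in\Pi$, for some $L>0$. Define, for $\pi\in\Pi$, \[ T_L(\pi)=\mathrm{proj}_\Pi\Bigl(\pi-\frac1L\nabla V_\mu(\pi)\Bigr),\qquad G_L(\pi)=L\bigl(\pi-T_L(\pi)\bigr). \] Then for all $\pi\in\Pi$, \[ V_\rho\bigl(T_L(\pi)\bigr)-V_\rho^\star\le\frac{2\sqrt{2|\mathcal{S}|}}{1-\gamma}\left\|\frac{d_\rho(\pi^\star)}{\mu}\right\|_\infty\|G_L(\pi)\|_2 . \]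
   Context: A discounted Markov decision problem (in cost-minimization form) consists of a finite state set $\mathcal{S}$, a finite action set $\mathcal{A}$, transition probabilities $P(s'|s,a)$, a cost function $R:\mathcal{S}\times\mathcal{A}\to[0,1]$ (written $R_{s,a}$), and a discount factor $\gamma\in[0,1)$. Policies: $\Pi=\Delta(\mathcal{A})^{|\mathcal{S}|}\subset\mathbf{R}^{|\mathcal{S}|\times|\mathcal{A}|}$, $\pi_{s,a}$ the probability of action $a$ at state $s$. $V_s(\pi)=\mathbf{E}\bigl[\sum_{t\ge0}\gamma^tR(s_t,a_t)\mid s_0=s\bigr]$ with $a_t\sim\pi_{s_t}$, $s_{t+1}\sim P(\cdot|s_t,a_t)$; $V_\rho(\pi)=\sum_s\rho_sV_s(\pi)$, $V^\star_\rho=\min_{\pi\in\Pi}V_\rho(\pi)$; $\pi^\star$ denotes a policy minimizing $V_s$ simultaneously for all $s$. $Q_{s,a}(\pi)=R_{s,a}+\gamma\sum_{s'}P(s'|s,a)V_{s'}(\pi)$. Discounted state visitation: $d_{s,s'}(\pi)=(1-\gamma)\sum_{t\ge0}\gamma^t\Pr^\pi(s_t=s'\mid s_0=s)$, $d_{\rho,s'}(\pi)=\sum_s\rho_sd_{s,s'}(\pi)$. The policy gradient $\nabla V_\mu(\pi)$ has entries $\frac1{1-\gamma}d_{\mu,s}(\pi)Q_{s,a}(\pi)$. For $p,q\in\Delta(\mathcal{S})$, $\|p/q\|_\infty=\max_sp_s/q_s$ with $0/0=1$. $\mathrm{proj}_\Pi$ denotes Euclidean projection onto $\Pi$. *)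

theory Defs
  imports "HOL-Analysis.Analysis"
begin

(* Policies are |S| x |A| real matrices: pi $ s $ a = probability of action a at state s.
   States 's and actions 'a are finite types. P s a s' = P(s'|s,a), R s a = cost. *)

definition policies :: "(real^'a^'s) set" where
  "policies = {\<pi>. \<forall>s. (\<forall>a. 0 \<le> \<pi> $ s $ a) \<and> (\<Sum>a\<in>UNIV. \<pi> $ s $ a) = 1}"

definition is_distr :: "('s::finite \<Rightarrow> real) \<Rightarrow> bool" where
  "is_distr p \<longleftrightarrow> (\<forall>s. 0 \<le> p s) \<and> (\<Sum>s\<in>UNIV. p s) = 1"

definition Ppi :: "('s \<Rightarrow> 'a::finite \<Rightarrow> 's \<Rightarrow> real) \<Rightarrow> real^'a^'s \<Rightarrow> 's \<Rightarrow> 's \<Rightarrow> real" where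
  "Ppi P \<pi> s s' = (\<Sum>a\<in>UNIV. \<pi> $ s $ a * P s a s')"

fun pstep :: "('s::finite \<Rightarrow> 'a::finite \<Rightarrow> 's \<Rightarrow> real) \<Rightarrow> real^'a^'s \<Rightarrow> nat \<Rightarrow> 's \<Rightarrow> 's \<Rightarrow> real" where
  "pstep P \<pi> 0 s s' = (if s = s' then 1 else 0)"
| "pstep P \<pi> (Suc t) s s'' = (\<Sum>s'\<in>UNIV. pstep P \<pi> t s s' * Ppi P \<pi> s' s'')"

definition Vs :: "('s::finite \<Rightarrow> 'a::finite \<Rightarrow> 's \<Rightarrow> real) \<Rightarrow> ('s \<Rightarrow> 'a \<Rightarrow> real) \<Rightarrow> real
                   \<Rightarrow> 's \<Rightarrow> real^'a^'s \<Rightarrow> real" where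
  "Vs P R \<gamma> s \<pi> = (\<Sum>t. \<gamma> ^ t * (\<Sum>s'\<in>UNIV. pstep P \<pi> t s s' * (\<Sum>a\<in>UNIV. \<pi> $ s' $ a * R s' a)))"

definition Vrho :: "('s::finite \<Rightarrow> 'a::finite \<Rightarrow> 's \<Rightarrow> real) \<Rightarrow> ('s \<Rightarrow> 'a \<Rightarrow> real) \<Rightarrow> real
                   \<Rightarrow> ('s \<Rightarrow> real) \<Rightarrow> real^'a^'s \<Rightarrow> real" where
  "Vrho P R \<gamma> \<rho> \<pi> = (\<Sum>s\<in>UNIV. \<rho> s * Vs P R \<gamma> s \<pi>)"

definition Vstar :: "('s::finite \<Rightarrow> 'a::finite \<Rightarrow> 's \<Rightarrow> real) \<Rightarrow> ('s \<Rightarrow> 'a \<Rightarrow> real) \<Rightarrow> real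
                   \<Rightarrow> ('s \<Rightarrow> real) \<Rightarrow> real" where
  "Vstar P R \<gamma> \<rho> = Inf (Vrho P R \<gamma> \<rho> ` policies)"

definition Qsa :: "('s::finite \<Rightarrow> 'a::finite \<Rightarrow> 's \<Rightarrow> real) \<Rightarrow> ('s \<Rightarrow> 'a \<Rightarrow> real) \<Rightarrow> real
                   \<Rightarrow> 's \<Rightarrow> 'a \<Rightarrow> real^'a^'s \<Rightarrow> real" where
  "Qsa P R \<gamma> s a \<pi> = R s a + \<gamma> * (\<Sum>s'\<in>UNIV. P s a s' * Vs P R \<gamma> s' \<pi>)"

definition dvis :: "('s::finite \<Rightarrow> 'a::finite \<Rightarrow> 's \<Rightarrow> real) \<Rightarrow> real \<Rightarrow> real^'a^'s \<Rightarrow> 's \<Rightarrow> 's \<Rightarrow> real" where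
  "dvis P \<gamma> \<pi> s s' = (1 - \<gamma>) * (\<Sum>t. \<gamma> ^ t * pstep P \<pi> t s s')"

definition drho :: "('s::finite \<Rightarrow> 'a::finite \<Rightarrow> 's \<Rightarrow> real) \<Rightarrow> real \<Rightarrow> ('s \<Rightarrow> real)
                    \<Rightarrow> real^'a^'s \<Rightarrow> 's \<Rightarrow> real" where
  "drho P \<gamma> \<rho> \<pi> s' = (\<Sum>s\<in>UNIV. \<rho> s * dvis P \<gamma> \<pi> s s')"

(* policy gradient of V_mu, with the entries given by the policy gradient theorem *)
definition gradV :: "('s::finite \<Rightarrow> 'a::finite \<Rightarrow> 's \<Rightarrow> real) \<Rightarrow> ('s \<Rightarrow> 'a \<Rightarrow> real) \<Rightarrow> real
                    \<Rightarrow> ('s \<Rightarrow> real) \<Rightarrow> real^'a^'s \<Rightarrow> real^'a^'s" where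
  "gradV P R \<gamma> \<mu> \<pi> = (\<chi> s a. 1 / (1 - \<gamma>) * drho P \<gamma> \<mu> \<pi> s * Qsa P R \<gamma> s a \<pi>)"

(* || p / q ||_inf = max_s p_s / q_s, with 0/0 = 1 and c/0 = infinity for c > 0 *)
definition ratio_entry :: "real \<Rightarrow> real \<Rightarrow> ereal" where
  "ratio_entry p q = (if q = 0 then (if p = 0 then 1 else \<infinity>) else ereal (p / q))"

definition dist_mismatch :: "('s::finite \<Rightarrow> real) \<Rightarrow> ('s \<Rightarrow> real) \<Rightarrow> ereal" where
  "dist_mismatch p q = Max ((\<lambda>s. ratio_entry (p s) (q s)) ` UNIV)"

definition TL :: "('s::finite \<Rightarrow> 'a::finite \<Rightarrow> 's \<Rightarrow> real) \<Rightarrow> ('s \<Rightarrow> 'a \<Rightarrow> real) \<Rightarrow> real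
                   \<Rightarrow> ('s \<Rightarrow> real) \<Rightarrow> real \<Rightarrow> real^'a^'s \<Rightarrow> real^'a^'s" where
  "TL P R \<gamma> \<mu> L \<pi> = closest_point policies (\<pi> - (1 / L) *\<^sub>R gradV P R \<gamma> \<mu> \<pi>)"

definition GL :: "('s::finite \<Rightarrow> 'a::finite \<Rightarrow> 's \<Rightarrow> real) \<Rightarrow> ('s \<Rightarrow> 'a \<Rightarrow> real) \<Rightarrow> real
                   \<Rightarrow> ('s \<Rightarrow> real) \<Rightarrow> real \<Rightarrow> real^'a^'s \<Rightarrow> real^'a^'s" where
  "GL P R \<gamma> \<mu> L \<pi> = L *\<^sub>R (\<pi> - TL P R \<gamma> \<mu> L \<pi>)"

end

theory Submission
  imports Defs
begin

(*
  Write pi' = T_L(pi) and let pi_g be a policy that is greedy for Q(pi').  By the performance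
  difference lemma, V_rho(pi') - V_rho(pi_star) is the d_rho(pi_star)-average of the advantage of pi'
  over pi_star with respect to Q(pi'), which is pointwise at most the (nonnegative) advantage of
  pi' over pi_g.  Bounding d_rho(pi_star) by the mismatch coefficient times mu, and mu by
  d_mu(pi') / (1 - gamma), turns this into the policy gradient inner product
  <grad V_mu(pi'), pi' - pi_g>, up to the factor mismatch / (1 - gamma) (gradient domination).
  Finally, the variational inequality of the projection and L-smoothness bound that inner
  product by 2 |G_L(pi)| |pi' - pi_g|, and Pi, a product of simplices, has diameter
  sqrt(2 |S|).
*)

lemma Ppi_nonneg:
  assumes "\<And>s a. is_distr (P s a)" "\<pi> \<in> policies"
  shows "0 \<le> Ppi P \<pi> s s'"
  using assms unfolding Ppi_def is_distr_def policies_def by (auto intro!: sum_nonneg)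

lemma sum_Ppi:
  assumes "\<And>s a. is_distr (P s a)" "\<pi> \<in> policies"
  shows "(\<Sum>s'\<in>UNIV. Ppi P \<pi> s s') = 1"
proof -
  have "(\<Sum>s'\<in>UNIV. Ppi P \<pi> s s') = (\<Sum>a\<in>UNIV. \<pi> $ s $ a * (\<Sum>s'\<in>UNIV. P s a s'))"
    unfolding Ppi_def sum_distrib_left by (rule sum.swap)
  also have "\<dots> = 1" using assms unfolding is_distr_def policies_def by simp
  finally show ?thesis .
qed

lemma pstep_nonneg:
  assumes "\<And>s a. is_distr (P s a)" "\<pi> \<in> policies"
  shows "0 \<le> pstep P \<pi> t s s'"
  by (induction t arbitrary: s') (auto intro!: sum_nonneg mult_nonneg_nonneg Ppi_nonneg[OF assms])

lemma sum_pstep: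
  assumes "\<And>s a. is_distr (P s a)" "\<pi> \<in> policies"
  shows "(\<Sum>s'\<in>UNIV. pstep P \<pi> t s s') = 1"
proof (induction t)
  case (Suc t)
  have "(\<Sum>s'\<in>UNIV. pstep P \<pi> (Suc t) s s')
      = (\<Sum>s1\<in>UNIV. pstep P \<pi> t s s1 * (\<Sum>s'\<in>UNIV. Ppi P \<pi> s1 s'))"
    unfolding pstep.simps sum_distrib_left by (rule sum.swap)
  then show ?case using Suc sum_Ppi[OF assms] by simp
qed simp

lemma pstep_le_1:
  assumes "\<And>s a. is_distr (P s a)" "\<pi> \<in> policies"
  shows "pstep P \<pi> t s s' \<le> 1"
proof -
  have "pstep P \<pi> t s s' \<le> (\<Sum>s'\<in>UNIV. pstep P \<pi> t s s')"
    by (rule member_le_sum) (auto intro: pstep_nonneg[OF assms])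
  then show ?thesis using sum_pstep[OF assms] by simp
qed

lemma pstep_Suc_left:
  "pstep P \<pi> (Suc t) s s'' = (\<Sum>s1\<in>UNIV. Ppi P \<pi> s s1 * pstep P \<pi> t s1 s'')"
proof (induction t arbitrary: s'')
  case 0
  show ?case by (simp add: if_distrib if_distribR cong: if_cong)
next
  case (Suc t)
  have "pstep P \<pi> (Suc (Suc t)) s s''
      = (\<Sum>s'\<in>UNIV. (\<Sum>s1\<in>UNIV. Ppi P \<pi> s s1 * pstep P \<pi> t s1 s') * Ppi P \<pi> s' s'')"
    using Suc by simp
  also have "\<dots> = (\<Sum>s1\<in>UNIV. Ppi P \<pi> s s1 * (\<Sum>s'\<in>UNIV. pstep P \<pi> t s1 s' * Ppi P \<pi> s' s''))"
    unfolding sum_distrib_left sum_distrib_right mult.assoc by (rule sum.swap)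
  finally show ?case by simp
qed

definition policy_cost :: "real^'a::finite^'s \<Rightarrow> ('s \<Rightarrow> 'a \<Rightarrow> real) \<Rightarrow> 's \<Rightarrow> real" where
  "policy_cost \<pi> R s = (\<Sum>a\<in>UNIV. \<pi> $ s $ a * R s a)"

lemma sum_policy_Qsa:
  "(\<Sum>a\<in>UNIV. \<pi> $ s $ a * Qsa P R \<gamma> s a \<pi>') =
     policy_cost \<pi> R s + \<gamma> * (\<Sum>s1\<in>UNIV. Ppi P \<pi> s s1 * Vs P R \<gamma> s1 \<pi>')"
  unfolding Qsa_def Ppi_def policy_cost_def
  by (simp add: algebra_simps sum.distrib sum_distrib_left sum_distrib_right)
    (subst sum.swap, simp add: mult_ac)

text \<open>The entries of the resolvent \<open>(I - \<gamma> P\<^sub>\<pi>)\<^sup>-\<^sup>1\<close>; unlike \<open>dvis\<close> it is not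
  normalised by \<open>1 - \<gamma>\<close>, which keeps the Bellman identities free of that factor.\<close>
definition occupancy :: "('s::finite \<Rightarrow> 'a::finite \<Rightarrow> 's \<Rightarrow> real) \<Rightarrow> real^'a^'s \<Rightarrow> real \<Rightarrow> 's \<Rightarrow> 's \<Rightarrow> real" where
  "occupancy P \<pi> \<gamma> s s' = (\<Sum>t. \<gamma> ^ t * pstep P \<pi> t s s')"

lemma dvis_eq_occupancy: "dvis P \<gamma> \<pi> s s' = (1 - \<gamma>) * occupancy P \<pi> \<gamma> s s'"
  unfolding dvis_def occupancy_def ..

locale discounted_policy =
  fixes P :: "'s::finite \<Rightarrow> 'a::finite \<Rightarrow> 's \<Rightarrow> real" and \<pi> :: "real^'a^'s" and \<gamma> :: real
  assumes P_distr: "\<And>s a. is_distr (P s a)" and policy: "\<pi> \<in> policies"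
    and gamma: "0 \<le> \<gamma>" "\<gamma> < 1"
begin

lemma summable_discounted_pstep: "summable (\<lambda>t. \<gamma> ^ t * pstep P \<pi> t s s')"
proof (rule summable_comparison_test'[of "\<lambda>t. \<gamma> ^ t"])
  show "summable (\<lambda>t. \<gamma> ^ t)" using gamma by (intro summable_geometric) simp
  show "norm (\<gamma> ^ t * pstep P \<pi> t s s') \<le> \<gamma> ^ t" for t
    using pstep_nonneg[OF P_distr policy] pstep_le_1[OF P_distr policy] gamma
    by (simp add: abs_mult mult_left_le)
qed

lemma occupancy_nonneg: "0 \<le> occupancy P \<pi> \<gamma> s s'"
  unfolding occupancy_def using pstep_nonneg[OF P_distr policy] gamma
  by (intro suminf_nonneg summable_discounted_pstep) auto

lemma occupancy_split_head:
  "occupancy P \<pi> \<gamma> s s' = (if s = s' then 1 else 0) + (\<Sum>t. \<gamma> ^ Suc t * pstep P \<pi> (Suc t) s s')"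
  unfolding occupancy_def using suminf_split_head[OF summable_discounted_pstep[of s s']] by simp

lemma occupancy_diag_ge_1: "1 \<le> occupancy P \<pi> \<gamma> s s"
proof -
  have "summable (\<lambda>t. \<gamma> ^ Suc t * pstep P \<pi> (Suc t) s s)"
    using summable_discounted_pstep by (subst summable_Suc_iff)
  then have "0 \<le> (\<Sum>t. \<gamma> ^ Suc t * pstep P \<pi> (Suc t) s s)"
    using pstep_nonneg[OF P_distr policy] gamma
    by (intro suminf_nonneg) (auto simp del: power_Suc pstep.simps)
  then show ?thesis by (simp add: occupancy_split_head)
qed

lemma suminf_discounted_expectation:
  "(\<Sum>t. \<gamma> ^ t * (\<Sum>s'\<in>UNIV. pstep P \<pi> t s s' * f s')) = (\<Sum>s'\<in>UNIV. occupancy P \<pi> \<gamma> s s' * f s')"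
proof -
  have "(\<Sum>t. \<gamma> ^ t * (\<Sum>s'\<in>UNIV. pstep P \<pi> t s s' * f s'))
      = (\<Sum>t. \<Sum>s'\<in>UNIV. \<gamma> ^ t * pstep P \<pi> t s s' * f s')"
    by (simp add: sum_distrib_left mult.assoc)
  also have "\<dots> = (\<Sum>s'\<in>UNIV. \<Sum>t. \<gamma> ^ t * pstep P \<pi> t s s' * f s')"
    by (intro suminf_sum summable_mult2 summable_discounted_pstep)
  finally show ?thesis
    unfolding occupancy_def by (simp add: suminf_mult2[OF summable_discounted_pstep])
qed

lemma occupancy_Suc_left:
  "occupancy P \<pi> \<gamma> s s'' =
     (if s = s'' then 1 else 0) + \<gamma> * (\<Sum>s1\<in>UNIV. Ppi P \<pi> s s1 * occupancy P \<pi> \<gamma> s1 s'')"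
proof -
  have "(\<Sum>t. \<gamma> ^ Suc t * pstep P \<pi> (Suc t) s s'')
      = (\<Sum>t. \<gamma> * (\<Sum>s1\<in>UNIV. Ppi P \<pi> s s1 * (\<gamma> ^ t * pstep P \<pi> t s1 s'')))"
    by (simp del: pstep.simps add: pstep_Suc_left sum_distrib_left mult_ac)
  also have "\<dots> = \<gamma> * (\<Sum>t. \<Sum>s1\<in>UNIV. Ppi P \<pi> s s1 * (\<gamma> ^ t * pstep P \<pi> t s1 s''))"
    by (intro suminf_mult summable_sum summable_mult summable_discounted_pstep)
  also have "(\<Sum>t. \<Sum>s1\<in>UNIV. Ppi P \<pi> s s1 * (\<gamma> ^ t * pstep P \<pi> t s1 s''))
      = (\<Sum>s1\<in>UNIV. Ppi P \<pi> s s1 * occupancy P \<pi> \<gamma> s1 s'')"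
    unfolding occupancy_def
    by (subst suminf_sum) (auto intro: summable_mult summable_discounted_pstep
        simp: suminf_mult[OF summable_discounted_pstep])
  finally show ?thesis by (simp add: occupancy_split_head)
qed

lemma occupancy_bellman:
  "(\<Sum>s'\<in>UNIV. occupancy P \<pi> \<gamma> s s' * f s') =
     f s + \<gamma> * (\<Sum>s1\<in>UNIV. Ppi P \<pi> s s1 * (\<Sum>s'\<in>UNIV. occupancy P \<pi> \<gamma> s1 s' * f s'))"
proof -
  have "(\<Sum>s'\<in>UNIV. occupancy P \<pi> \<gamma> s s' * f s') =
      (\<Sum>s'\<in>UNIV. (if s = s' then f s' else 0)
         + \<gamma> * (\<Sum>s1\<in>UNIV. Ppi P \<pi> s s1 * occupancy P \<pi> \<gamma> s1 s' * f s'))"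
    by (intro sum.cong refl, subst occupancy_Suc_left)
      (simp add: algebra_simps sum_distrib_right sum_distrib_left)
  also have "\<dots> = f s + \<gamma> * (\<Sum>s'\<in>UNIV. \<Sum>s1\<in>UNIV. Ppi P \<pi> s s1 * occupancy P \<pi> \<gamma> s1 s' * f s')"
    by (simp add: sum.distrib sum_distrib_left)
  also have "(\<Sum>s'\<in>UNIV. \<Sum>s1\<in>UNIV. Ppi P \<pi> s s1 * occupancy P \<pi> \<gamma> s1 s' * f s')
      = (\<Sum>s1\<in>UNIV. Ppi P \<pi> s s1 * (\<Sum>s'\<in>UNIV. occupancy P \<pi> \<gamma> s1 s' * f s'))"
    by (subst sum.swap) (simp add: sum_distrib_left mult.assoc)
  finally show ?thesis .
qed

text \<open>The occupancy is also a left inverse of \<open>I - \<gamma> P\<^sub>\<pi>\<close>: the sum telescopes, since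
  \<open>\<gamma>\<^sup>t P\<^sub>\<pi>\<^sup>t g\<close> tends to zero.\<close>
lemma occupancy_left_inverse:
  "(\<Sum>s'\<in>UNIV. occupancy P \<pi> \<gamma> s s' * (g s' - \<gamma> * (\<Sum>s1\<in>UNIV. Ppi P \<pi> s' s1 * g s1))) = g s"
proof -
  define F where "F t = \<gamma> ^ t * (\<Sum>s'\<in>UNIV. pstep P \<pi> t s s' * g s')" for t
  have "\<gamma> ^ t * (\<Sum>s'\<in>UNIV. pstep P \<pi> t s s' * (\<gamma> * (\<Sum>s1\<in>UNIV. Ppi P \<pi> s' s1 * g s1))) = F (Suc t)" for t
  proof -
    have "(\<Sum>s'\<in>UNIV. pstep P \<pi> t s s' * (\<Sum>s1\<in>UNIV. Ppi P \<pi> s' s1 * g s1))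
        = (\<Sum>s1\<in>UNIV. pstep P \<pi> (Suc t) s s1 * g s1)"
      unfolding pstep.simps sum_distrib_left sum_distrib_right mult.assoc by (rule sum.swap)
    then show ?thesis unfolding F_def by (simp add: sum_distrib_left[symmetric] mult_ac)
  qed
  then have step: "\<gamma> ^ t * (\<Sum>s'\<in>UNIV. pstep P \<pi> t s s' * (g s' - \<gamma> * (\<Sum>s1\<in>UNIV. Ppi P \<pi> s' s1 * g s1)))
      = F t - F (Suc t)" for t
    unfolding F_def by (simp only: right_diff_distrib sum_subtractf)
  have "F \<longlonglongrightarrow> 0"
  proof (rule Lim_null_comparison)
    let ?B = "\<Sum>s'\<in>UNIV. \<bar>g s'\<bar>"
    have "\<bar>\<Sum>s'\<in>UNIV. pstep P \<pi> t s s' * g s'\<bar> \<le> ?B" for t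
      using pstep_nonneg[OF P_distr policy] pstep_le_1[OF P_distr policy]
      by (intro order.trans[OF sum_abs] sum_mono) (simp add: abs_mult mult_left_le_one_le)
    then show "\<forall>\<^sub>F t in sequentially. norm (F t) \<le> \<gamma> ^ t * ?B"
      unfolding F_def using gamma by (auto simp: abs_mult mult_left_mono)
    show "(\<lambda>t. \<gamma> ^ t * ?B) \<longlonglongrightarrow> 0"
      using gamma by (intro tendsto_mult_left_zero LIMSEQ_power_zero) auto
  qed
  then have "(\<lambda>t. F t - F (Suc t)) sums F 0"
    using telescope_sums'[of F 0] by simp
  moreover have "F 0 = g s"
    unfolding F_def by (simp add: if_distrib if_distribR cong: if_cong)
  ultimately show ?thesis
    using suminf_discounted_expectation[symmetric] step by (simp add: sums_iff)
qed

lemma Vs_eq_occupancy: "Vs P R \<gamma> s \<pi> = (\<Sum>s'\<in>UNIV. occupancy P \<pi> \<gamma> s s' * policy_cost \<pi> R s')"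
  unfolding Vs_def policy_cost_def by (rule suminf_discounted_expectation)

lemma Vs_bellman: "Vs P R \<gamma> s \<pi> = (\<Sum>a\<in>UNIV. \<pi> $ s $ a * Qsa P R \<gamma> s a \<pi>)"
  unfolding sum_policy_Qsa Vs_eq_occupancy by (rule occupancy_bellman)

lemma Vs_diff_eq_occupancy:
  "Vs P R \<gamma> s \<pi> - Vs P R \<gamma> s \<pi>' =
   (\<Sum>s'\<in>UNIV. occupancy P \<pi> \<gamma> s s' * ((\<Sum>a\<in>UNIV. \<pi> $ s' $ a * Qsa P R \<gamma> s' a \<pi>') - Vs P R \<gamma> s' \<pi>'))"
proof -
  let ?V = "\<lambda>s. Vs P R \<gamma> s \<pi>'"
  have "(\<Sum>s'\<in>UNIV. occupancy P \<pi> \<gamma> s s' * ((\<Sum>a\<in>UNIV. \<pi> $ s' $ a * Qsa P R \<gamma> s' a \<pi>') - ?V s'))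
     = (\<Sum>s'\<in>UNIV. occupancy P \<pi> \<gamma> s s' * policy_cost \<pi> R s')
       - (\<Sum>s'\<in>UNIV. occupancy P \<pi> \<gamma> s s' * (?V s' - \<gamma> * (\<Sum>s1\<in>UNIV. Ppi P \<pi> s' s1 * ?V s1)))"
    unfolding sum_policy_Qsa by (simp add: algebra_simps sum_subtractf sum.distrib)
  then show ?thesis unfolding occupancy_left_inverse Vs_eq_occupancy by simp
qed

lemma drho_nonneg: "(\<And>s. 0 \<le> \<rho> s) \<Longrightarrow> 0 \<le> drho P \<gamma> \<rho> \<pi> s'"
  unfolding drho_def dvis_eq_occupancy using occupancy_nonneg gamma
  by (auto intro!: sum_nonneg)

lemma drho_ge_initial:
  assumes "\<And>s. 0 \<le> \<mu> s"
  shows "(1 - \<gamma>) * \<mu> s \<le> drho P \<gamma> \<mu> \<pi> s"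
proof -
  have "\<mu> s \<le> \<mu> s * occupancy P \<pi> \<gamma> s s"
    using mult_left_mono[OF occupancy_diag_ge_1 assms] by simp
  then have "(1 - \<gamma>) * \<mu> s \<le> (1 - \<gamma>) * (\<mu> s * occupancy P \<pi> \<gamma> s s)"
    using gamma by (intro mult_left_mono) auto
  also have "\<dots> = \<mu> s * dvis P \<gamma> \<pi> s s"
    by (simp add: dvis_eq_occupancy)
  also have "\<dots> \<le> drho P \<gamma> \<mu> \<pi> s" unfolding drho_def dvis_eq_occupancy
    using assms occupancy_nonneg gamma
    by (intro member_le_sum[where f="\<lambda>s0. \<mu> s0 * ((1 - \<gamma>) * occupancy P \<pi> \<gamma> s0 s)"]) auto
  finally show ?thesis .
qed

end

theorem performance_difference:
  assumes "\<And>s a. is_distr (P s a)" "\<pi> \<in> policies" "\<pi>' \<in> policies" "0 \<le> \<gamma>" "\<gamma> < 1"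
  shows "Vrho P R \<gamma> \<rho> \<pi> - Vrho P R \<gamma> \<rho> \<pi>' =
    1 / (1 - \<gamma>) * (\<Sum>s\<in>UNIV. drho P \<gamma> \<rho> \<pi>' s *
      ((\<Sum>a\<in>UNIV. \<pi> $ s $ a * Qsa P R \<gamma> s a \<pi>) - (\<Sum>a\<in>UNIV. \<pi>' $ s $ a * Qsa P R \<gamma> s a \<pi>)))"
proof -
  interpret new: discounted_policy P \<pi> \<gamma> using assms by unfold_locales
  interpret old: discounted_policy P \<pi>' \<gamma> using assms by unfold_locales
  define A where "A s = (\<Sum>a\<in>UNIV. \<pi> $ s $ a * Qsa P R \<gamma> s a \<pi>) - (\<Sum>a\<in>UNIV. \<pi>' $ s $ a * Qsa P R \<gamma> s a \<pi>)" for s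
  have per_state: "Vs P R \<gamma> s \<pi> - Vs P R \<gamma> s \<pi>' = (\<Sum>s'\<in>UNIV. occupancy P \<pi>' \<gamma> s s' * A s')" for s
    using old.Vs_diff_eq_occupancy[of R s \<pi>]
    unfolding A_def new.Vs_bellman[symmetric]
    by (simp add: sum_negf[symmetric] algebra_simps)
  have "Vrho P R \<gamma> \<rho> \<pi> - Vrho P R \<gamma> \<rho> \<pi>' = (\<Sum>s\<in>UNIV. \<rho> s * (Vs P R \<gamma> s \<pi> - Vs P R \<gamma> s \<pi>'))"
    unfolding Vrho_def by (simp add: sum_subtractf right_diff_distrib)
  also have "\<dots> = (\<Sum>s\<in>UNIV. \<Sum>s'\<in>UNIV. \<rho> s * occupancy P \<pi>' \<gamma> s s' * A s')"
    by (simp add: per_state sum_distrib_left mult.assoc)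
  also have "\<dots> = (\<Sum>s'\<in>UNIV. (\<Sum>s\<in>UNIV. \<rho> s * occupancy P \<pi>' \<gamma> s s') * A s')"
    by (subst sum.swap) (simp add: sum_distrib_right)
  also have "\<dots> = (\<Sum>s'\<in>UNIV. drho P \<gamma> \<rho> \<pi>' s' / (1 - \<gamma>) * A s')"
    using assms(5) unfolding drho_def dvis_eq_occupancy
    by (simp add: sum_distrib_left[symmetric] mult.left_commute[of "\<rho> _"])
  finally show ?thesis unfolding A_def by (simp add: sum_distrib_left)
qed

lemma inner_gradV:
  "inner (gradV P R \<gamma> \<mu> \<pi>) (\<pi> - \<pi>') =
    1 / (1 - \<gamma>) * (\<Sum>s\<in>UNIV. drho P \<gamma> \<mu> \<pi> s *
      ((\<Sum>a\<in>UNIV. \<pi> $ s $ a * Qsa P R \<gamma> s a \<pi>) - (\<Sum>a\<in>UNIV. \<pi>' $ s $ a * Qsa P R \<gamma> s a \<pi>)))"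
proof -
  have "inner (gradV P R \<gamma> \<mu> \<pi>) (\<pi> - \<pi>') = (\<Sum>s\<in>UNIV. 1 / (1 - \<gamma>) * drho P \<gamma> \<mu> \<pi> s *
      (\<Sum>a\<in>UNIV. (\<pi> $ s $ a - \<pi>' $ s $ a) * Qsa P R \<gamma> s a \<pi>))"
    unfolding inner_vec_def gradV_def by (simp add: inner_real_def sum_distrib_left mult_ac)
  then show ?thesis
    by (simp add: sum_distrib_left left_diff_distrib sum_subtractf mult.assoc)
qed

lemma closed_policies: "closed (policies :: (real^'a::finite^'s::finite) set)"
  unfolding policies_def
  by (intro closed_Collect_all closed_Collect_conj closed_Collect_le closed_Collect_eq continuous_intros)

lemma convex_policies: "convex (policies :: (real^'a::finite^'s::finite) set)"
  unfolding convex_def policies_def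
  by (auto simp: sum.distrib sum_distrib_left[symmetric])

lemma policy_le_1: "\<pi> \<in> policies \<Longrightarrow> \<pi> $ s $ a \<le> 1"
proof -
  assume "\<pi> \<in> policies"
  then have "\<pi> $ s $ a \<le> (\<Sum>a\<in>UNIV. \<pi> $ s $ a)"
    unfolding policies_def by (intro member_le_sum) auto
  then show ?thesis using \<open>\<pi> \<in> policies\<close> unfolding policies_def by auto
qed

lemma norm_diff_policies_le:
  fixes x y :: "real^'a::finite^'s::finite"
  assumes "x \<in> policies" "y \<in> policies"
  shows "norm (x - y) \<le> sqrt (2 * real CARD('s))"
proof (rule real_le_rsqrt)
  have "(norm (x - y))\<^sup>2 = (\<Sum>s\<in>UNIV. \<Sum>a\<in>UNIV. (x $ s $ a - y $ s $ a)\<^sup>2)"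
    unfolding power2_norm_eq_inner inner_vec_def by (simp add: power2_eq_square inner_real_def)
  also have "\<dots> \<le> (\<Sum>s\<in>UNIV. \<Sum>a\<in>UNIV. x $ s $ a + y $ s $ a)"
  proof (intro sum_mono)
    fix s a
    have "0 \<le> x $ s $ a" "0 \<le> y $ s $ a" using assms unfolding policies_def by auto
    moreover have "x $ s $ a \<le> 1" "y $ s $ a \<le> 1" using assms policy_le_1 by auto
    ultimately have "x $ s $ a * x $ s $ a \<le> x $ s $ a" "y $ s $ a * y $ s $ a \<le> y $ s $ a"
      "0 \<le> x $ s $ a * y $ s $ a"
      by (simp_all add: mult_left_le_one_le)
    then show "(x $ s $ a - y $ s $ a)\<^sup>2 \<le> x $ s $ a + y $ s $ a"
      by (simp add: power2_eq_square algebra_simps)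
  qed
  also have "\<dots> = 2 * real CARD('s)"
    using assms unfolding policies_def by (simp add: sum.distrib)
  finally show "(norm (x - y))\<^sup>2 \<le> 2 * real CARD('s)" .
qed

lemma greedy_policy_exists:
  fixes q :: "'s::finite \<Rightarrow> 'a::finite \<Rightarrow> real"
  obtains \<pi>g :: "real^'a^'s" where "\<pi>g \<in> policies"
    "\<And>\<pi> s. \<pi> \<in> policies \<Longrightarrow> (\<Sum>a\<in>UNIV. \<pi>g $ s $ a * q s a) \<le> (\<Sum>a\<in>UNIV. \<pi> $ s $ a * q s a)"
proof -
  have "\<exists>a. \<forall>b. q s a \<le> q s b" for s
  proof -
    have "Min (range (q s)) \<in> range (q s)" by (rule Min_in) auto
    then obtain a where "q s a = Min (range (q s))" by (metis rangeE)
    moreover have "Min (range (q s)) \<le> q s b" for b by (rule Min_le) auto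
    ultimately show ?thesis by metis
  qed
  then obtain amin where amin: "\<And>s b. q s (amin s) \<le> q s b" by metis
  define \<pi>g :: "real^'a^'s" where "\<pi>g = (\<chi> s a. if a = amin s then 1 else 0)"
  show ?thesis
  proof
    show "\<pi>g \<in> policies" unfolding \<pi>g_def policies_def by auto
    fix \<pi> :: "real^'a^'s" and s assume "\<pi> \<in> policies"
    then have "q s (amin s) = (\<Sum>a\<in>UNIV. \<pi> $ s $ a * q s (amin s))"
      unfolding policies_def by (simp add: sum_distrib_right[symmetric])
    also have "\<dots> \<le> (\<Sum>a\<in>UNIV. \<pi> $ s $ a * q s a)"
      using \<open>\<pi> \<in> policies\<close> amin unfolding policies_def by (intro sum_mono mult_left_mono) auto
    finally show "(\<Sum>a\<in>UNIV. \<pi>g $ s $ a * q s a) \<le> (\<Sum>a\<in>UNIV. \<pi> $ s $ a * q s a)"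
      unfolding \<pi>g_def by (simp add: if_distrib if_distribR cong: if_cong)
  qed
qed

lemma projected_gradient_step_inner_le:
  fixes g :: "'v::euclidean_space \<Rightarrow> 'v"
  assumes C: "closed C" "convex C" and x: "x \<in> C" and y: "y \<in> C" and L: "0 < L"
    and lipschitz: "\<And>u v. u \<in> C \<Longrightarrow> v \<in> C \<Longrightarrow> norm (g u - g v) \<le> L * norm (u - v)"
  defines "x' \<equiv> closest_point C (x - (1 / L) *\<^sub>R g x)"
  shows "inner (g x') (x' - y) \<le> 2 * norm (L *\<^sub>R (x - x')) * norm (x' - y)"
proof -
  define G where "G = L *\<^sub>R (x - x')"
  have x'C: "x' \<in> C" unfolding x'_def using closest_point_in_set[OF C(1)] x by blast
  have "inner ((x - (1 / L) *\<^sub>R g x) - x') (y - x') \<le> 0"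
    unfolding x'_def by (rule closest_point_dot[OF C(2,1) y])
  moreover have "(x - (1 / L) *\<^sub>R g x) - x' = (1 / L) *\<^sub>R (G - g x)"
    unfolding G_def using L by (simp add: algebra_simps)
  ultimately have "inner (G - g x) (y - x') \<le> 0"
    using L by (simp add: divide_le_0_iff)
  then have variational: "inner (g x) (x' - y) \<le> inner G (x' - y)"
    by (simp add: inner_diff_left inner_diff_right)
  have "inner (g x') (x' - y) = inner (g x) (x' - y) + inner (g x' - g x) (x' - y)"
    by (simp add: inner_diff_left)
  also have "\<dots> \<le> norm G * norm (x' - y) + norm (g x' - g x) * norm (x' - y)"
    using variational norm_cauchy_schwarz[of G "x' - y"] norm_cauchy_schwarz[of "g x' - g x" "x' - y"] by linarith
  also have "\<dots> \<le> norm G * norm (x' - y) + L * norm (x' - x) * norm (x' - y)"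
    using lipschitz[OF x'C x] by (simp add: mult_right_mono)
  also have "L * norm (x' - x) = norm G"
    unfolding G_def using L by (simp add: norm_minus_commute)
  finally show ?thesis unfolding G_def by simp
qed

lemma dist_mismatch_bound:
  assumes bounded: "dist_mismatch p q \<noteq> \<infinity>" and p: "\<And>s. 0 \<le> p s" and q: "\<And>s. 0 \<le> q s"
  shows "0 \<le> real_of_ereal (dist_mismatch p q)" "p s \<le> real_of_ereal (dist_mismatch p q) * q s"
proof -
  define M where "M = real_of_ereal (dist_mismatch p q)"
  let ?e = "\<lambda>s. ratio_entry (p s) (q s)"
  have entry_le: "?e s \<le> dist_mismatch p q" for s
    unfolding dist_mismatch_def by (rule Max_ge) auto
  have entry_nonneg: "0 \<le> ?e s" for s
    unfolding ratio_entry_def using p q by auto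
  have "0 \<le> dist_mismatch p q" using entry_nonneg entry_le order_trans by blast
  then have M: "dist_mismatch p q = ereal M" "0 \<le> M"
    unfolding M_def using bounded by (cases "dist_mismatch p q"; simp)+
  then show "0 \<le> real_of_ereal (dist_mismatch p q)" unfolding M_def by simp
  show "p s \<le> real_of_ereal (dist_mismatch p q) * q s"
  proof (cases "q s = 0")
    case True
    then show ?thesis using entry_le[of s] M unfolding ratio_entry_def by (auto split: if_splits)
  next
    case False
    then have "p s / q s \<le> M" using entry_le[of s] M unfolding ratio_entry_def by simp
    then show ?thesis using False q[of s] unfolding M_def by (simp add: divide_le_eq)
  qed
qed

lemma Vstar_eq_Vrho_optimal:
  assumes "\<pi>star \<in> policies" "\<And>s \<pi>. \<pi> \<in> policies \<Longrightarrow> Vs P R \<gamma> s \<pi>star \<le> Vs P R \<gamma> s \<pi>"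
    and "\<And>s. 0 \<le> \<rho> s"
  shows "Vstar P R \<gamma> \<rho> = Vrho P R \<gamma> \<rho> \<pi>star"
  unfolding Vstar_def
proof (rule cInf_eq_minimum)
  show "Vrho P R \<gamma> \<rho> \<pi>star \<in> Vrho P R \<gamma> \<rho> ` policies" using assms(1) by blast
  fix x assume "x \<in> Vrho P R \<gamma> \<rho> ` policies"
  then show "Vrho P R \<gamma> \<rho> \<pi>star \<le> x"
    unfolding Vrho_def using assms(2,3) by (auto intro!: sum_mono mult_left_mono)
qed

theorem gradient_domination:
  fixes P :: "'s::finite \<Rightarrow> 'a::finite \<Rightarrow> 's \<Rightarrow> real"
  assumes P_distr: "\<And>s a. is_distr (P s a)" and gamma: "0 \<le> \<gamma>" "\<gamma> < 1"
    and rho: "\<And>s. 0 \<le> \<rho> s" and mu: "\<And>s. 0 \<le> \<mu> s"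
    and pistar: "\<pi>star \<in> policies" "\<And>s \<pi>'. \<pi>' \<in> policies \<Longrightarrow> Vs P R \<gamma> s \<pi>star \<le> Vs P R \<gamma> s \<pi>'"
    and pi: "\<pi> \<in> policies"
    and mismatch: "dist_mismatch (drho P \<gamma> \<rho> \<pi>star) \<mu> \<noteq> \<infinity>"
    and descent_bound: "\<And>\<pi>'. \<pi>' \<in> policies \<Longrightarrow> inner (gradV P R \<gamma> \<mu> \<pi>) (\<pi> - \<pi>') \<le> B"
  shows "Vrho P R \<gamma> \<rho> \<pi> - Vstar P R \<gamma> \<rho>
    \<le> real_of_ereal (dist_mismatch (drho P \<gamma> \<rho> \<pi>star) \<mu>) / (1 - \<gamma>) * B"
proof -
  interpret current: discounted_policy P \<pi> \<gamma> using P_distr pi gamma by unfold_locales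
  interpret optimal: discounted_policy P \<pi>star \<gamma> using P_distr pistar(1) gamma by unfold_locales
  define Q where "Q s a = Qsa P R \<gamma> s a \<pi>" for s a
  define adv where "adv \<pi>' s = (\<Sum>a\<in>UNIV. \<pi> $ s $ a * Q s a) - (\<Sum>a\<in>UNIV. \<pi>' $ s $ a * Q s a)" for \<pi>' s
  define M where "M = real_of_ereal (dist_mismatch (drho P \<gamma> \<rho> \<pi>star) \<mu>)"
  obtain \<pi>g where greedy: "\<pi>g \<in> policies"
    "\<And>\<pi>' s. \<pi>' \<in> policies \<Longrightarrow> (\<Sum>a\<in>UNIV. \<pi>g $ s $ a * Q s a) \<le> (\<Sum>a\<in>UNIV. \<pi>' $ s $ a * Q s a)"
    using greedy_policy_exists by blast
  have adv_greedy: "0 \<le> adv \<pi>g s" "adv \<pi>star s \<le> adv \<pi>g s" for s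
    unfolding adv_def using greedy(2)[OF pi] greedy(2)[OF pistar(1)] by auto
  have M: "0 \<le> M" "drho P \<gamma> \<rho> \<pi>star s \<le> M * \<mu> s" for s
    unfolding M_def using dist_mismatch_bound[OF mismatch optimal.drho_nonneg[where \<rho> = \<rho>, OF rho] mu] by auto
  have "Vrho P R \<gamma> \<rho> \<pi> - Vstar P R \<gamma> \<rho>
      = 1 / (1 - \<gamma>) * (\<Sum>s\<in>UNIV. drho P \<gamma> \<rho> \<pi>star s * adv \<pi>star s)"
    using Vstar_eq_Vrho_optimal[OF pistar rho] performance_difference[OF P_distr pi pistar(1) gamma]
    unfolding adv_def Q_def by simp
  also have "\<dots> \<le> 1 / (1 - \<gamma>) * (\<Sum>s\<in>UNIV. M * (drho P \<gamma> \<mu> \<pi> s / (1 - \<gamma>)) * adv \<pi>g s)"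
  proof (intro mult_left_mono sum_mono)
    fix s :: 's
    have "\<mu> s \<le> drho P \<gamma> \<mu> \<pi> s / (1 - \<gamma>)"
      using current.drho_ge_initial[OF mu] gamma by (simp add: field_simps)
    then have "M * \<mu> s \<le> M * (drho P \<gamma> \<mu> \<pi> s / (1 - \<gamma>))"
      using M(1) by (rule mult_left_mono)
    then have "drho P \<gamma> \<rho> \<pi>star s \<le> M * (drho P \<gamma> \<mu> \<pi> s / (1 - \<gamma>))"
      by (rule order_trans[OF M(2)])
    then have "drho P \<gamma> \<rho> \<pi>star s * adv \<pi>g s \<le> M * (drho P \<gamma> \<mu> \<pi> s / (1 - \<gamma>)) * adv \<pi>g s"
      using adv_greedy(1) by (rule mult_right_mono)
    moreover have "drho P \<gamma> \<rho> \<pi>star s * adv \<pi>star s \<le> drho P \<gamma> \<rho> \<pi>star s * adv \<pi>g s"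
      using adv_greedy(2) optimal.drho_nonneg[where \<rho> = \<rho>, OF rho] by (rule mult_left_mono)
    ultimately show "drho P \<gamma> \<rho> \<pi>star s * adv \<pi>star s \<le> M * (drho P \<gamma> \<mu> \<pi> s / (1 - \<gamma>)) * adv \<pi>g s"
      by linarith
  qed (use gamma in simp)
  also have "\<dots> = M / (1 - \<gamma>) * inner (gradV P R \<gamma> \<mu> \<pi>) (\<pi> - \<pi>g)"
    unfolding inner_gradV adv_def Q_def
    by (simp add: sum_distrib_left sum_divide_distrib mult_ac)
  also have "\<dots> \<le> M / (1 - \<gamma>) * B"
    using descent_bound[OF greedy(1)] M(1) gamma by (intro mult_left_mono) auto
  finally show ?thesis unfolding M_def .
qed

theorem lemma5:
  fixes P :: "'s::finite \<Rightarrow> 'a::finite \<Rightarrow> 's \<Rightarrow> real"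
    and R :: "'s \<Rightarrow> 'a \<Rightarrow> real"
    and \<gamma> L :: real
    and \<rho> \<mu> :: "'s \<Rightarrow> real"
    and \<pi>star \<pi> :: "real^'a^'s"
  assumes P_distr: "\<And>s a. is_distr (P s a)"
    and R_range: "\<And>s a. 0 \<le> R s a \<and> R s a \<le> 1"
    and gamma: "0 \<le> \<gamma>" "\<gamma> < 1"
    and rho: "is_distr \<rho>" and mu: "is_distr \<mu>"
    and pistar: "\<pi>star \<in> policies"
      "\<And>s \<pi>'. \<pi>' \<in> policies \<Longrightarrow> Vs P R \<gamma> s \<pi>star \<le> Vs P R \<gamma> s \<pi>'"
    and L_pos: "L > 0"
    and smooth: "\<And>\<pi>1 \<pi>2. \<pi>1 \<in> policies \<Longrightarrow> \<pi>2 \<in> policies \<Longrightarrow>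
        norm (gradV P R \<gamma> \<mu> \<pi>1 - gradV P R \<gamma> \<mu> \<pi>2) \<le> L * norm (\<pi>1 - \<pi>2)"
    and pi: "\<pi> \<in> policies"
  shows "dist_mismatch (drho P \<gamma> \<rho> \<pi>star) \<mu> = \<infinity> \<or>
    Vrho P R \<gamma> \<rho> (TL P R \<gamma> \<mu> L \<pi>) - Vstar P R \<gamma> \<rho>
      \<le> 2 * sqrt (2 * real CARD('s)) / (1 - \<gamma>)
         * real_of_ereal (dist_mismatch (drho P \<gamma> \<rho> \<pi>star) \<mu>)
         * norm (GL P R \<gamma> \<mu> L \<pi>)"
proof (cases "dist_mismatch (drho P \<gamma> \<rho> \<pi>star) \<mu> = \<infinity>")
  case False
  let ?\<pi>' = "TL P R \<gamma> \<mu> L \<pi>"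
  have "?\<pi>' \<in> policies"
    unfolding TL_def using closest_point_in_set[OF closed_policies] pi by blast
  have nonneg: "\<And>s. 0 \<le> \<rho> s" "\<And>s. 0 \<le> \<mu> s" using rho mu unfolding is_distr_def by auto
  have projection_bound: "inner (gradV P R \<gamma> \<mu> ?\<pi>') (?\<pi>' - \<pi>')
      \<le> 2 * sqrt (2 * real CARD('s)) * norm (GL P R \<gamma> \<mu> L \<pi>)" if "\<pi>' \<in> policies" for \<pi>'
  proof -
    have "inner (gradV P R \<gamma> \<mu> ?\<pi>') (?\<pi>' - \<pi>') \<le> 2 * norm (GL P R \<gamma> \<mu> L \<pi>) * norm (?\<pi>' - \<pi>')"
      unfolding TL_def GL_def
      by (rule projected_gradient_step_inner_le[OF closed_policies convex_policies pi that L_pos smooth])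
    also have "\<dots> \<le> 2 * norm (GL P R \<gamma> \<mu> L \<pi>) * sqrt (2 * real CARD('s))"
      using norm_diff_policies_le[OF \<open>?\<pi>' \<in> policies\<close> that] by (simp add: mult_left_mono)
    finally show ?thesis by (simp add: mult_ac)
  qed
  have "Vrho P R \<gamma> \<rho> ?\<pi>' - Vstar P R \<gamma> \<rho>
      \<le> real_of_ereal (dist_mismatch (drho P \<gamma> \<rho> \<pi>star) \<mu>) / (1 - \<gamma>)
         * (2 * sqrt (2 * real CARD('s)) * norm (GL P R \<gamma> \<mu> L \<pi>))"
    by (rule gradient_domination[OF P_distr gamma nonneg pistar \<open>?\<pi>' \<in> policies\<close> False projection_bound])
  then show ?thesis by (simp add: mult_ac)
qed simp

end
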